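(* Let $a,b\ge1$ and let $X(a,b)$ be the digraph with vertex set $\{x_1,\dots,x_a\}\cup\{y_1,\dots,y_a\}\cup\{z_1,\dots,z_b\}$ and arc set $\{x_jy_j,\,y_jx_j: 1\le j\le a\}\cup\{x_jz_\ell,\, z_\ell y_j: 1\le j\le a,\ 1\le \ell\le b\}$. Then the eigenvalues of $H(X(a,b))$ are $$\frac{-1+\sqrt{1+8ab}}{2},\quad 1^{(a)},\quad 0^{(b-1)},\quad (-1)^{(a-1)},\quad \frac{-1-\sqrt{1+8ab}}{2},$$ where superscripts denote multiplicities.
   Context: For a digraph $X$ (finite vertex set, arcs are ordered pairs of distinct vertices), the Hermitian adjacency matrix $H(X)$ has $(u,v)$-entry $1$ if $uv$ and $vu$ are arcs, $i$ if only $uv$ is an arc, $-i$ if only $vu$ is an arc, and $0$ otherwise. *)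

theory Defs
  imports "Jordan_Normal_Form.Char_Poly"
begin

definition herm_adj :: "nat \<Rightarrow> (nat \<Rightarrow> nat \<Rightarrow> bool) \<Rightarrow> complex mat" where
  "herm_adj n arc = mat n n (\<lambda>(u, v).
     if arc u v \<and> arc v u then 1
     else if arc u v then \<i>
     else if arc v u then - \<i>
     else 0)"

text \<open>The digraph X(a,b) on vertices {0..<2a+b}: x_j = j-1, y_j = a+j-1,
  z_l = 2a+l-1 (j in 1..a, l in 1..b, shifted to 0-based indices).\<close>
definition Xab_arc :: "nat \<Rightarrow> nat \<Rightarrow> nat \<Rightarrow> nat \<Rightarrow> bool" where
  "Xab_arc a b u v \<longleftrightarrow>
     (\<exists>j<a. (u = j \<and> v = a + j) \<or> (u = a + j \<and> v = j)) \<or>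
     (\<exists>j<a. \<exists>l<b. (u = j \<and> v = 2*a + l) \<or> (u = 2*a + l \<and> v = a + j))"

definition Xab_herm :: "nat \<Rightarrow> nat \<Rightarrow> complex mat" where
  "Xab_herm a b = herm_adj (2*a + b) (Xab_arc a b)"

end

theory Submission
  imports Defs
begin

text \<open>
  Write \<open>u\<^sub>j = x\<^sub>j - y\<^sub>j\<close> and \<open>\<zeta> = \<Sigma>\<^sub>l z\<^sub>l\<close>. Each \<open>x\<^sub>j + y\<^sub>j\<close> is an eigenvector of \<open>H\<close> for \<open>1\<close>, each
  \<open>z\<^sub>l - z\<^sub>l\<^sub>+\<^sub>1\<close> lies in the kernel, and \<open>H u\<^sub>j = -u\<^sub>j - 2\<i>\<zeta>\<close>, \<open>H \<zeta> = \<i>b \<Sigma>\<^sub>j u\<^sub>j\<close>. So the differences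
  \<open>u\<^sub>j - u\<^sub>j\<^sub>+\<^sub>1\<close> are eigenvectors for \<open>-1\<close>, and on the invariant plane spanned by \<open>\<Sigma>\<^sub>j u\<^sub>j\<close> and \<open>\<zeta>\<close> the
  matrix \<open>H\<close> has characteristic polynomial \<open>\<lambda>\<^sup>2 + \<lambda> - 2ab\<close>. Arranging vectors of this kind as the
  columns of a lower triangular matrix \<open>P\<close> with nonzero diagonal makes \<open>P\<^sup>-\<^sup>1 H P\<close> upper triangular,
  and the characteristic polynomial is read off its diagonal.
\<close>

context comm_monoid_set
begin

lemma lessThan_add: "F g {..<m + n :: nat} = F g {..<m} \<^bold>* F (\<lambda>i. g (m + i)) {..<n}"
  by (induction n) (simp_all add: assoc)

lemma lessThan_double_add:
  "F g {..<2 * a + b :: nat} = F g {..<a} \<^bold>* F (\<lambda>j. g (a + j)) {..<a} \<^bold>* F (\<lambda>l. g (2 * a + l)) {..<b}"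
  using lessThan_add[of g "2 * a" b] lessThan_add[of g a a] by (simp add: mult_2)

end

lemma char_poly_triangularized:
  fixes A :: "'a :: field mat"
  assumes carrier: "A \<in> carrier_mat n n" "P \<in> carrier_mat n n" "T \<in> carrier_mat n n"
    and conj: "A * P = P * T"
    and P_lower: "\<And>i j. i < j \<Longrightarrow> j < n \<Longrightarrow> P $$ (i, j) = 0"
    and P_diag: "\<And>i. i < n \<Longrightarrow> P $$ (i, i) \<noteq> 0"
    and T_upper: "upper_triangular T"
  shows "char_poly A = (\<Prod>i<n. [:- T $$ (i, i), 1:])"
proof -
  have "det P = prod_list (diag_mat P)"
    by (rule det_lower_triangular[OF P_lower carrier(2)])
  also have "\<dots> \<noteq> 0"
    using carrier(2) P_diag by (auto simp: prod_list_zero_iff diag_mat_def)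
  finally obtain Q where Q: "Q \<in> carrier_mat n n" "P * Q = 1\<^sub>m n" "Q * P = 1\<^sub>m n"
    using det_non_zero_imp_unit[OF carrier(2), of "()"] unfolding Units_def ring_mat_def by auto
  have "A = A * (P * Q)" using carrier Q by simp
  also have "\<dots> = A * P * Q" using carrier Q by (simp add: assoc_mult_mat)
  also have "\<dots> = P * T * Q" by (simp add: conj)
  finally have "similar_mat A T"
    using carrier Q by (intro similar_matI[where P = P and Q = Q]) auto
  then have "char_poly A = char_poly T" by (rule char_poly_similar)
  also have "\<dots> = (\<Prod>t\<leftarrow>diag_mat T. [:- t, 1:])"
    by (rule char_poly_upper_triangular[OF carrier(3) T_upper])
  also have "\<dots> = (\<Prod>i<n. [:- T $$ (i, i), 1:])"
    using carrier(3) by (simp add: diag_mat_def prod.distinct_set_conv_list[symmetric] lessThan_atLeast0)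
  finally show ?thesis .
qed

lemma index_mult_mat_mat:
  assumes "i < n" "k < p"
  shows "(mat n m f * mat m p g) $$ (i, k) = (\<Sum>j<m. f (i, j) * g (j, k))"
  using assms by (simp add: scalar_prod_def lessThan_atLeast0)

lemma if_zero_mult:
  "(if P then x else 0) * y = (if P then x * y else (0 :: 'a :: mult_zero))"
  "y * (if P then x else 0) = (if P then y * x else (0 :: 'a))"
  by auto

lemma if_zero_divide_uminus:
  "(if P then x else 0) / y = (if P then x / y else (0 :: 'a :: division_ring))"
  "- (if P then x else 0) = (if P then - x else (0 :: 'a))"
  by auto

lemma if_if_zero: "(if P then (if Q then x else 0) else 0) = (if P \<and> Q then x else (0 :: 'a :: zero))"
  by auto

lemma sum_if_ge_const: "(\<Sum>j<a. if k \<le> j then c else 0) = of_nat (a - k) * (c :: 'a :: semiring_1)"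
proof -
  have "(\<Sum>j<a. if k \<le> j then c else 0) = (\<Sum>j\<in>{k..<a}. c)"
    by (rule sum.mono_neutral_cong_right) auto
  then show ?thesis by simp
qed

lemma sum_delta_conj:
  fixes f :: "'b \<Rightarrow> 'a :: comm_monoid_add"
  assumes "finite S"
  shows "(\<Sum>j\<in>S. if j = i \<and> P j then f j else 0) = (if i \<in> S \<and> P i then f i else 0)"
    and "(\<Sum>j\<in>S. if i = j \<and> P j then f j else 0) = (if i \<in> S \<and> P i then f i else 0)"
    and "(\<Sum>j\<in>S. if P j \<and> j = i then f j else 0) = (if i \<in> S \<and> P i then f i else 0)"
    and "(\<Sum>j\<in>S. if P j \<and> i = j then f j else 0) = (if i \<in> S \<and> P i then f i else 0)"
proof -
  have delta: "(\<Sum>j\<in>S. if j = i then (if P j then f j else 0) else 0) = (if i \<in> S \<and> P i then f i else 0)"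
    using sum.delta[OF assms, of i "\<lambda>j. if P j then f j else 0"] by simp
  show "(\<Sum>j\<in>S. if j = i \<and> P j then f j else 0) = (if i \<in> S \<and> P i then f i else 0)"
    and "(\<Sum>j\<in>S. if i = j \<and> P j then f j else 0) = (if i \<in> S \<and> P i then f i else 0)"
    and "(\<Sum>j\<in>S. if P j \<and> j = i then f j else 0) = (if i \<in> S \<and> P i then f i else 0)"
    and "(\<Sum>j\<in>S. if P j \<and> i = j then f j else 0) = (if i \<in> S \<and> P i then f i else 0)"
    by (rule trans[OF sum.cong delta]; auto)+
qed

lemma sum_delta_Suc:
  fixes f :: "nat \<Rightarrow> 'a :: comm_monoid_add"
  shows "(\<Sum>l<k. if i = Suc l then f l else 0) = (if 0 < i \<and> i \<le> k then f (i - 1) else 0)"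
    and "(\<Sum>l<k. if Suc l = i then f l else 0) = (if 0 < i \<and> i \<le> k then f (i - 1) else 0)"
proof -
  have "(\<Sum>l<k. if i = Suc l then f l else 0) = (\<Sum>l<k. if l = i - 1 then (if 0 < i then f l else 0) else 0)"
    by (rule sum.cong) auto
  also have "\<dots> = (if 0 < i \<and> i \<le> k then f (i - 1) else 0)" by (subst sum.delta) auto
  finally show "(\<Sum>l<k. if i = Suc l then f l else 0) = (if 0 < i \<and> i \<le> k then f (i - 1) else 0)" .
  then show "(\<Sum>l<k. if Suc l = i then f l else 0) = (if 0 < i \<and> i \<le> k then f (i - 1) else 0)"
    by (simp add: eq_commute[of "Suc _" i])
qed

lemma Xab_index_cases:
  fixes i a b :: nat
  assumes "i < 2 * a + b"
  obtains (x) j where "j < a" "i = j" | (y) j where "j < a" "i = a + j" | (z) l where "l < b" "i = 2 * a + l"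
proof -
  consider "i < a" | "a \<le> i" "i < 2 * a" | "2 * a \<le> i" by linarith
  then show thesis
  proof cases
    case 1 then show thesis by (rule x) simp
  next
    case 2 then show thesis by (intro y[of "i - a"]) auto
  next
    case 3 then show thesis using assms by (intro z[of "i - 2 * a"]) auto
  qed
qed

lemma Xab_arc_iff:
  "Xab_arc a b u v \<longleftrightarrow>
     (u < a \<and> v = a + u) \<or> (a \<le> u \<and> u < 2 * a \<and> v + a = u) \<or>
     (u < a \<and> 2 * a \<le> v \<and> v < 2 * a + b) \<or> (2 * a \<le> u \<and> u < 2 * a + b \<and> a \<le> v \<and> v < 2 * a)"
  (is "_ \<longleftrightarrow> ?xy \<or> ?yx \<or> ?xz \<or> ?zy")
proof
  assume "Xab_arc a b u v"
  then show "?xy \<or> ?yx \<or> ?xz \<or> ?zy"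
    unfolding Xab_arc_def by auto
next
  have "Xab_arc a b u v" if ?xy using that unfolding Xab_arc_def by auto
  moreover have "Xab_arc a b u v" if ?yx
    using that unfolding Xab_arc_def by (intro disjI1 exI[of _ v]) auto
  moreover have "Xab_arc a b u v" if ?xz
    using that unfolding Xab_arc_def by (intro disjI2 exI[of _ u]) (auto intro!: exI[of _ "v - 2 * a"])
  moreover have "Xab_arc a b u v" if ?zy
    using that unfolding Xab_arc_def by (intro disjI2 exI[of _ "v - a"]) (auto intro!: exI[of _ "u - 2 * a"])
  ultimately show "?xy \<or> ?yx \<or> ?xz \<or> ?zy \<Longrightarrow> Xab_arc a b u v" by blast
qed

definition Xab_entry :: "nat \<Rightarrow> nat \<Rightarrow> nat \<Rightarrow> complex" where
  "Xab_entry a i k =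
    (if i < a then (if k < a then 0 else if k < 2 * a then (if k = a + i then 1 else 0) else \<i>)
     else if i < 2 * a then (if k < a then (if i = a + k then 1 else 0) else if k < 2 * a then 0 else - \<i>)
     else (if k < a then - \<i> else if k < 2 * a then \<i> else 0))"

lemma Xab_herm_eq_mat: "Xab_herm a b = mat (2 * a + b) (2 * a + b) (\<lambda>(i, k). Xab_entry a i k)"
  by (rule eq_matI) (auto simp: Xab_herm_def herm_adj_def Xab_entry_def Xab_arc_iff)

text \<open>
  With \<open>r\<^sup>2 + r = 2ab\<close> and \<open>c = -\<i>(1 + r) / b\<close>, the columns of \<open>Xab_basis\<close> are \<open>x\<^sub>j + y\<^sub>j\<close>, then
  \<open>-2 \<Sigma>\<^sub>j\<^sub>\<ge>\<^sub>q y\<^sub>j + c (a - q) / a \<zeta>\<close> for \<open>q < a\<close>, then \<open>z\<^sub>l - z\<^sub>l\<^sub>+\<^sub>1\<close> and finally \<open>z\<^sub>b\<^sub>-\<^sub>1\<close>; \<open>Xab_triang\<close>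
  is the matrix of \<open>H\<close> in this basis.
\<close>

definition Xab_basis :: "nat \<Rightarrow> complex \<Rightarrow> nat \<Rightarrow> nat \<Rightarrow> complex" where
  "Xab_basis a c i k =
    (if k < a then (if i = k then 1 else 0) + (if i = a + k then 1 else 0)
     else if k < 2 * a then (if k \<le> i \<and> i < 2 * a then -2 else 0)
       + (if 2 * a \<le> i then c * of_nat (2 * a - k) / of_nat a else 0)
     else (if i = k then 1 else 0) - (if i = k + 1 then 1 else 0))"

definition Xab_triang :: "nat \<Rightarrow> nat \<Rightarrow> complex \<Rightarrow> complex \<Rightarrow> nat \<Rightarrow> nat \<Rightarrow> complex" where
  "Xab_triang a b r c m k =
    (if k < a then (if m = k then 1 else 0)
     else if k < 2 * a then (if m < a \<and> k - a \<le> m then -2 else 0)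
       + (if m < a then (1 + r) * of_nat (2 * a - k) / of_nat a else 0)
       + (if m = a then (1 + r) * of_nat (2 * a - k) / of_nat a else 0) + (if m = k then -1 else 0)
     else if k + 1 < 2 * a + b then 0
     else (if m < a then \<i> else 0) + (if m = a then \<i> else 0)
       + (if 2 * a \<le> m then - \<i> * c * of_nat (m - 2 * a + 1) else 0))"

lemma Xab_root_identities:
  assumes c: "c = - \<i> * (1 + r) / of_nat b" and r: "r * r + r = 2 * of_nat a * of_nat b"
    and "b \<ge> 1"
  shows "of_nat b * (\<i> * c) = 1 + r" "of_nat b * (\<i> * (c * x)) = (1 + r) * x"
    "c * r = -2 * \<i> * of_nat a" "c * (r * x) = -2 * \<i> * of_nat a * x"
proof -
  have nonzero: "complex_of_nat b \<noteq> 0" using \<open>b \<ge> 1\<close> by simp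
  show bc: "of_nat b * (\<i> * c) = 1 + r" using nonzero unfolding c by (simp add: field_simps)
  then show "of_nat b * (\<i> * (c * x)) = (1 + r) * x" by (simp flip: mult.assoc)
  have "c * r = - \<i> * (r * r + r) / of_nat b" unfolding c by (simp add: algebra_simps)
  also have "\<dots> = -2 * \<i> * of_nat a" using nonzero by (simp add: r)
  finally show cr: "c * r = -2 * \<i> * of_nat a" .
  then show "c * (r * x) = -2 * \<i> * of_nat a * x" by (simp flip: mult.assoc)
qed

lemma Xab_conj_entry:
  assumes "i < 2 * a + b" "k < 2 * a + b"
    and "c = - \<i> * (1 + r) / of_nat b" "r * r + r = 2 * of_nat a * of_nat b" "a \<ge> 1" "b \<ge> 1"
  shows "(\<Sum>m<2 * a + b. Xab_entry a i m * Xab_basis a c m k)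
       = (\<Sum>m<2 * a + b. Xab_basis a c i m * Xab_triang a b r c m k)"
  using assms(5,6) Xab_root_identities[OF assms(3,4,6)]
  unfolding sum.lessThan_double_add Xab_entry_def Xab_basis_def Xab_triang_def
  by (cases rule: Xab_index_cases[OF assms(1)]; cases rule: Xab_index_cases[OF assms(2)];
      cases "k + 1 < 2 * a + b";
      auto cong: sum.cong_simp if_cong
        simp: if_zero_mult if_zero_divide_uminus if_if_zero sum_if_ge_const sum_delta_conj
          sum_delta_Suc sum.delta sum.delta' ring_distribs sum.distrib sum_subtractf
          add.assoc add_divide_distrib diff_divide_distrib)

lemma prod_diag_Xab_triang:
  assumes "c = - \<i> * (1 + r) / of_nat b" "a \<ge> 1" "b \<ge> 1"
  shows "(\<Prod>i<2 * a + b. [:- Xab_triang a b r c i i, 1:])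
       = [:-r, 1:] * [:-1, 1:] ^ a * [:0, 1:] ^ (b - 1) * [:1, 1:] ^ (a - 1) * [:1 + r, 1:]"
proof -
  obtain a' where a': "a = Suc a'" using assms(2) by (cases a) auto
  obtain b' where b': "b = Suc b'" using assms(3) by (cases b) auto
  have first_y: "Xab_triang a b r c a a = r"
    using assms(2) by (simp add: Xab_triang_def)
  have "Xab_triang a b r c (2 * a + b') (2 * a + b') = - \<i> * c * of_nat b"
    using a' b' by (simp add: Xab_triang_def)
  also have "\<dots> = - (1 + r)"
    unfolding assms(1) using assms(3) by (simp add: field_simps)
  finally have last_z: "Xab_triang a b r c (2 * a + b') (2 * a + b') = - (1 + r)" .
  have x_block: "(\<Prod>j<a. [:- Xab_triang a b r c j j, 1:]) = [:-1, 1:] ^ a"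
    by (simp add: Xab_triang_def)
  have y_block: "(\<Prod>j<a. [:- Xab_triang a b r c (a + j) (a + j), 1:]) = [:-r, 1:] * [:1, 1:] ^ a'"
    unfolding a' prod.lessThan_Suc_shift using first_y by (simp add: Xab_triang_def a')
  have z_block: "(\<Prod>l<b. [:- Xab_triang a b r c (2 * a + l) (2 * a + l), 1:]) = [:0, 1:] ^ b' * [:1 + r, 1:]"
    unfolding b' prod.lessThan_Suc using last_z b' by (simp add: Xab_triang_def add.commute)
  have "a - 1 = a'" "b - 1 = b'" using a' b' by simp_all
  then show ?thesis
    unfolding prod.lessThan_double_add x_block y_block z_block by (simp only: mult_ac)
qed

lemma char_poly_Xab_herm_root:
  assumes "a \<ge> 1" "b \<ge> 1" and r: "r * r + r = 2 * of_nat a * of_nat b"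
  shows "char_poly (Xab_herm a b)
       = [:-r, 1:] * [:-1, 1:] ^ a * [:0, 1:] ^ (b - 1) * [:1, 1:] ^ (a - 1) * [:1 + r, 1:]"
proof -
  define n where "n = 2 * a + b"
  define c where "c = - \<i> * (1 + r) / of_nat b"
  define P where "P = mat n n (\<lambda>(i, k). Xab_basis a c i k)"
  define T where "T = mat n n (\<lambda>(i, k). Xab_triang a b r c i k)"
  have H: "Xab_herm a b = mat n n (\<lambda>(i, k). Xab_entry a i k)"
    unfolding n_def by (rule Xab_herm_eq_mat)
  have "Xab_herm a b * P = P * T"
  proof (rule eq_matI)
    fix i k assume "i < dim_row (P * T)" "k < dim_col (P * T)"
    then have "i < n" "k < n" by (simp_all add: P_def T_def)
    then show "(Xab_herm a b * P) $$ (i, k) = (P * T) $$ (i, k)"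
      using assms c_def unfolding H P_def T_def index_mult_mat_mat[OF \<open>i < n\<close> \<open>k < n\<close>]
      by (simp add: n_def Xab_conj_entry)
  qed (simp_all add: H P_def T_def)
  moreover have "upper_triangular T"
    by (auto simp: upper_triangular_def T_def Xab_triang_def n_def)
  ultimately have "char_poly (Xab_herm a b) = (\<Prod>i<n. [:- T $$ (i, i), 1:])"
    using assms by (intro char_poly_triangularized[where P = P])
      (auto simp: H P_def T_def Xab_basis_def n_def)
  also have "\<dots> = (\<Prod>i<n. [:- Xab_triang a b r c i i, 1:])"
    by (simp add: T_def)
  also have "\<dots> = [:-r, 1:] * [:-1, 1:] ^ a * [:0, 1:] ^ (b - 1) * [:1, 1:] ^ (a - 1) * [:1 + r, 1:]"
    unfolding n_def by (rule prod_diag_Xab_triang[OF c_def assms(1,2)])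
  finally show ?thesis .
qed

theorem lemma5p3:
  fixes a b :: nat
  assumes "a \<ge> 1" and "b \<ge> 1"
  shows "char_poly (Xab_herm a b) =
     [: - complex_of_real ((-1 + sqrt (1 + 8 * real a * real b)) / 2), 1 :]
     * [: -1, 1 :] ^ a
     * [: 0, 1 :] ^ (b - 1)
     * [: 1, 1 :] ^ (a - 1)
     * [: - complex_of_real ((-1 - sqrt (1 + 8 * real a * real b)) / 2), 1 :]"
proof -
  define s where "s = sqrt (1 + 8 * real a * real b)"
  define r where "r = (-1 + s) / 2"
  have "s * s = 1 + 8 * real a * real b" unfolding s_def by simp
  then have "r * r + r = 2 * real a * real b" unfolding r_def by (simp add: field_simps)
  then have "complex_of_real r * complex_of_real r + complex_of_real r = 2 * of_nat a * of_nat b"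
    by (metis of_real_add of_real_mult of_real_of_nat_eq of_real_numeral)
  moreover have "1 + complex_of_real r = - complex_of_real ((-1 - s) / 2)"
    unfolding r_def by (simp add: field_simps)
  ultimately show ?thesis
    using char_poly_Xab_herm_root[OF assms] by (simp only: r_def s_def)
qed

end
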